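(* Let $W$ be a standard Brownian motion, $\kappa:[0,1]\to[0,1]$ with $\kappa(0)=0$, $\kappa(1)=1$ H\"older continuous with some exponent $\tau>1/2$, $B(t)=W(t)-\kappa(t)W(1)$, and $X(t)=\sum_{n=0}^\infty\alpha^nB(\{b^nt\})$ with $\alpha\in(0,1)$, $b\in\{2,3,\dots\}$ and $\alpha^2b<1$. (a) There is a constant $L>0$ with $\mathbb E[(X(t)-X(s))^2]\le L|t-s|$ for all $s,t\in[0,1]$. (b) For every $\lambda\in(0,1)$ there is $\varepsilon>0$ such that $\mathbb E[(X(t)-X(s))^2]\ge\lambda|t-s|$ for all $s,t\in[0,1]$ with $|t-s|<\varepsilon$.
   Context: $\{x\}$ denotes the fractional part of $x\ge0$. *)

theory Defs
  imports "HOL-Probability.Probability"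
begin

definition std_brownian_motion :: "'a measure \<Rightarrow> (real \<Rightarrow> 'a \<Rightarrow> real) \<Rightarrow> bool" where
  "std_brownian_motion M W \<longleftrightarrow>
     prob_space M \<and>
     (\<forall>t. W t \<in> borel_measurable M) \<and>
     (AE \<omega> in M. W 0 \<omega> = 0) \<and>
     (AE \<omega> in M. continuous_on {0..} (\<lambda>t. W t \<omega>)) \<and>
     (\<forall>s t. 0 \<le> s \<and> s < t \<longrightarrow>
        distributed M lborel (\<lambda>\<omega>. W t \<omega> - W s \<omega>) (normal_density 0 (sqrt (t - s)))) \<and>
     (\<forall>(n::nat) (u::nat \<Rightarrow> real). 0 \<le> u 0 \<and> (\<forall>i<n. u i < u (Suc i)) \<longrightarrow>
        prob_space.indep_vars M (\<lambda>_. borel) (\<lambda>i \<omega>. W (u (Suc i)) \<omega> - W (u i) \<omega>) {..<n})"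

definition holder_on :: "real set \<Rightarrow> real \<Rightarrow> (real \<Rightarrow> real) \<Rightarrow> bool" where
  "holder_on S \<tau> f \<longleftrightarrow> (\<exists>C. \<forall>x\<in>S. \<forall>y\<in>S. \<bar>f x - f y\<bar> \<le> C * \<bar>x - y\<bar> powr \<tau>)"

definition bridge :: "(real \<Rightarrow> 'a \<Rightarrow> real) \<Rightarrow> (real \<Rightarrow> real) \<Rightarrow> real \<Rightarrow> 'a \<Rightarrow> real" where
  "bridge W \<kappa> t \<omega> = W t \<omega> - \<kappa> t * W 1 \<omega>"

definition Xproc :: "real \<Rightarrow> nat \<Rightarrow> (real \<Rightarrow> 'a \<Rightarrow> real) \<Rightarrow> (real \<Rightarrow> real) \<Rightarrow> real \<Rightarrow> 'a \<Rightarrow> real" where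
  "Xproc \<alpha> b W \<kappa> t \<omega> = (\<Sum>n. \<alpha> ^ n * bridge W \<kappa> (frac (real b ^ n * t)) \<omega>)"

end

theory Submission
  imports Defs
begin

(*
  Write h = t - s \<ge> 0 and D_n = B {b^n t} - B {b^n s}, so that X t - X s = \<Sum>_n \<alpha>^n D_n in L^2.
  As long as b^n h < 1, the points {b^n t} and {b^n s} are at distance b^n h on the circle
  [0,1), and D_n is the increment of W along the arc between them up to a multiple of W 1 of
  size O((b^n h)^\<sigma>) coming from \<kappa>. As \<sigma> > 1/2, this gives \<parallel>D_n\<parallel> \<le> K sqrt (b^n h) at every
  level, and summing the geometric series in q = \<alpha> sqrt b < 1 proves (a).

  For (b) let N be the first level with b^N h \<ge> 1. Increments of W along arcs have nonnegative
  covariances, so the arc terms of the levels n < N have second moment at least that of the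
  level-0 term, which is h. The \<kappa>-corrections (ratio \<alpha> b^\<sigma> < 1) and the tail n \<ge> N
  (\<alpha>^N \<le> q^N sqrt h) have L^2-norm o(sqrt h), so by Cauchy-Schwarz they change the second
  moment by o(h).
*)

section \<open>Square-integrable functions\<close>

definition square_integrable :: "'a measure \<Rightarrow> ('a \<Rightarrow> real) \<Rightarrow> bool" where
  "square_integrable M f \<longleftrightarrow> f \<in> borel_measurable M \<and> integrable M (\<lambda>x. (f x)\<^sup>2)"

definition L2_inner :: "'a measure \<Rightarrow> ('a \<Rightarrow> real) \<Rightarrow> ('a \<Rightarrow> real) \<Rightarrow> real" where
  "L2_inner M f g = (\<integral>x. f x * g x \<partial>M)"

definition L2_norm :: "'a measure \<Rightarrow> ('a \<Rightarrow> real) \<Rightarrow> real" where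
  "L2_norm M f = sqrt (L2_inner M f f)"

lemma square_integrable_measurable: "square_integrable M f \<Longrightarrow> f \<in> borel_measurable M"
  by (simp add: square_integrable_def)

lemma abs_mult_le_sum_squares: "\<bar>a * b\<bar> \<le> a\<^sup>2 + b\<^sup>2" for a b :: real
proof -
  have "2 * \<bar>a\<bar> * \<bar>b\<bar> \<le> a\<^sup>2 + b\<^sup>2"
    using sum_squares_bound[of "\<bar>a\<bar>" "\<bar>b\<bar>"] by simp
  then show ?thesis
    unfolding abs_mult using mult_nonneg_nonneg[OF abs_ge_zero[of a] abs_ge_zero[of b]] by linarith
qed

lemma square_integrable_imp_integrable_mult:
  assumes "square_integrable M f" "square_integrable M g"
  shows "integrable M (\<lambda>x. f x * g x)"
proof (rule Bochner_Integration.integrable_bound)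
  show "integrable M (\<lambda>x. (f x)\<^sup>2 + (g x)\<^sup>2)"
    using assms by (simp add: square_integrable_def)
  show "AE x in M. norm (f x * g x) \<le> norm ((f x)\<^sup>2 + (g x)\<^sup>2)"
    using abs_mult_le_sum_squares by simp
qed (use assms in \<open>simp add: square_integrable_def borel_measurable_times\<close>)

lemma square_integrable_add:
  assumes "square_integrable M f" "square_integrable M g"
  shows "square_integrable M (\<lambda>x. f x + g x)"
proof -
  have "integrable M (\<lambda>x. (f x)\<^sup>2 + 2 * (f x * g x) + (g x)\<^sup>2)"
    using assms square_integrable_imp_integrable_mult[OF assms] by (simp add: square_integrable_def)
  then show ?thesis
    using assms by (simp add: square_integrable_def power2_sum borel_measurable_add algebra_simps)
qed

lemma square_integrable_cmult: "square_integrable M f \<Longrightarrow> square_integrable M (\<lambda>x. c * f x)"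
  by (simp add: square_integrable_def power_mult_distrib borel_measurable_times)

lemma square_integrable_diff:
  "square_integrable M f \<Longrightarrow> square_integrable M g \<Longrightarrow> square_integrable M (\<lambda>x. f x - g x)"
  using square_integrable_add[of M f "\<lambda>x. - 1 * g x"] square_integrable_cmult[of M g "-1"] by simp

lemma square_integrable_sum:
  "(\<And>i. i \<in> I \<Longrightarrow> square_integrable M (f i)) \<Longrightarrow> square_integrable M (\<lambda>x. \<Sum>i\<in>I. f i x)"
proof (induction I rule: infinite_finite_induct)
  case (insert i I)
  then show ?case by (simp add: square_integrable_add)
qed (simp_all add: square_integrable_def)

lemma square_integrable_cong_AE:
  assumes "square_integrable M f" "g \<in> borel_measurable M" "AE x in M. f x = g x"
  shows "square_integrable M g"
proof -
  have "AE x in M. (f x)\<^sup>2 = (g x)\<^sup>2" using assms(3) by auto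
  then show ?thesis
    using assms unfolding square_integrable_def
    using integrable_cong_AE[of "\<lambda>x. (f x)\<^sup>2" M "\<lambda>x. (g x)\<^sup>2"] by auto
qed

lemma L2_inner_cong_AE:
  assumes "f \<in> borel_measurable M" "f' \<in> borel_measurable M" "AE x in M. f x = f' x"
    and "g \<in> borel_measurable M" "g' \<in> borel_measurable M" "AE x in M. g x = g' x"
  shows "L2_inner M f g = L2_inner M f' g'"
  unfolding L2_inner_def using assms by (intro integral_cong_AE) auto

lemma L2_inner_commute: "L2_inner M f g = L2_inner M g f"
  by (simp add: L2_inner_def mult.commute)

lemma L2_inner_add_left:
  "square_integrable M f \<Longrightarrow> square_integrable M g \<Longrightarrow> square_integrable M h \<Longrightarrow>
    L2_inner M (\<lambda>x. f x + g x) h = L2_inner M f h + L2_inner M g h"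
  unfolding L2_inner_def distrib_right
  by (intro Bochner_Integration.integral_add square_integrable_imp_integrable_mult)

lemma L2_inner_add_right:
  "square_integrable M f \<Longrightarrow> square_integrable M g \<Longrightarrow> square_integrable M h \<Longrightarrow>
    L2_inner M h (\<lambda>x. f x + g x) = L2_inner M h f + L2_inner M h g"
  using L2_inner_add_left by (simp add: L2_inner_commute[of M h])

lemma L2_inner_diff_left:
  "square_integrable M f \<Longrightarrow> square_integrable M g \<Longrightarrow> square_integrable M h \<Longrightarrow>
    L2_inner M (\<lambda>x. f x - g x) h = L2_inner M f h - L2_inner M g h"
  unfolding L2_inner_def left_diff_distrib
  by (intro Bochner_Integration.integral_diff square_integrable_imp_integrable_mult)

lemma L2_inner_diff_right:
  "square_integrable M f \<Longrightarrow> square_integrable M g \<Longrightarrow> square_integrable M h \<Longrightarrow>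
    L2_inner M h (\<lambda>x. f x - g x) = L2_inner M h f - L2_inner M h g"
  using L2_inner_diff_left by (simp add: L2_inner_commute[of M h])

lemma L2_inner_cmult_left: "L2_inner M (\<lambda>x. c * f x) g = c * L2_inner M f g"
  by (simp add: L2_inner_def mult.assoc)

lemma L2_inner_cmult_right: "L2_inner M f (\<lambda>x. c * g x) = c * L2_inner M f g"
  by (simp add: L2_inner_def mult.left_commute)

lemma L2_inner_sum_left:
  "(\<And>i. i \<in> I \<Longrightarrow> square_integrable M (f i)) \<Longrightarrow> square_integrable M g \<Longrightarrow>
    L2_inner M (\<lambda>x. \<Sum>i\<in>I. f i x) g = (\<Sum>i\<in>I. L2_inner M (f i) g)"
  unfolding L2_inner_def sum_distrib_right
  by (intro Bochner_Integration.integral_sum square_integrable_imp_integrable_mult) auto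

lemma L2_inner_sum_right:
  "(\<And>i. i \<in> I \<Longrightarrow> square_integrable M (f i)) \<Longrightarrow> square_integrable M g \<Longrightarrow>
    L2_inner M g (\<lambda>x. \<Sum>i\<in>I. f i x) = (\<Sum>i\<in>I. L2_inner M g (f i))"
  by (simp only: L2_inner_commute[of M g]) (rule L2_inner_sum_left)

lemma L2_inner_self_nonneg: "0 \<le> L2_inner M f f"
  by (simp add: L2_inner_def integral_nonneg_AE)

lemma L2_inner_self_eq_integral_square: "L2_inner M f f = (\<integral>x. (f x)\<^sup>2 \<partial>M)"
  by (simp add: L2_inner_def power2_eq_square)

lemma L2_norm_nonneg: "0 \<le> L2_norm M f"
  by (simp add: L2_norm_def L2_inner_self_nonneg)

lemma L2_norm_square: "(L2_norm M f)\<^sup>2 = L2_inner M f f"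
  by (simp add: L2_norm_def L2_inner_self_nonneg)

lemma L2_norm_cmult: "L2_norm M (\<lambda>x. c * f x) = \<bar>c\<bar> * L2_norm M f"
  by (simp add: L2_norm_def L2_inner_cmult_left L2_inner_cmult_right real_sqrt_mult
      power2_eq_square[symmetric] mult.assoc[symmetric])

lemma square_le_by_discriminant:
  fixes A B C :: real
  assumes nonneg: "\<And>r. 0 \<le> A - 2 * r * C + r\<^sup>2 * B" and "0 \<le> B"
  shows "C\<^sup>2 \<le> A * B"
proof (cases "B = 0")
  case True
  have "C = 0"
  proof (rule ccontr)
    assume "C \<noteq> 0"
    have "0 \<le> A - 2 * ((A + 1) / (2 * C)) * C" using nonneg[of "(A + 1) / (2 * C)"] True by simp
    also have "\<dots> = -1" using \<open>C \<noteq> 0\<close> by (simp add: field_simps)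
    finally show False by simp
  qed
  then show ?thesis using True by simp
next
  case False
  then have "0 < B" using \<open>0 \<le> B\<close> by simp
  have "0 \<le> A - 2 * (C / B) * C + (C / B)\<^sup>2 * B" by (rule nonneg)
  also have "\<dots> = A - C\<^sup>2 / B" using \<open>0 < B\<close> by (simp add: field_simps power2_eq_square)
  finally show ?thesis using \<open>0 < B\<close> by (simp add: field_simps)
qed

lemma L2_Cauchy_Schwarz:
  assumes f: "square_integrable M f" and g: "square_integrable M g"
  shows "\<bar>L2_inner M f g\<bar> \<le> L2_norm M f * L2_norm M g"
proof -
  have "(L2_inner M f g)\<^sup>2 \<le> L2_inner M f f * L2_inner M g g"
  proof (rule square_le_by_discriminant)
    fix r
    have rg: "square_integrable M (\<lambda>x. r * g x)" using g by (rule square_integrable_cmult)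
    have "L2_inner M (\<lambda>x. f x - r * g x) (\<lambda>x. f x - r * g x)
        = L2_inner M f f - 2 * r * L2_inner M f g + r\<^sup>2 * L2_inner M g g"
      using f g rg
      by (simp add: L2_inner_diff_left L2_inner_diff_right square_integrable_diff
          L2_inner_cmult_left L2_inner_cmult_right L2_inner_commute[of M g f] power2_eq_square
          algebra_simps)
    then show "0 \<le> L2_inner M f f - 2 * r * L2_inner M f g + r\<^sup>2 * L2_inner M g g"
      using L2_inner_self_nonneg by metis
  qed (rule L2_inner_self_nonneg)
  then show ?thesis
    unfolding L2_norm_def real_sqrt_mult[symmetric] by (intro real_le_rsqrt) simp
qed

lemma L2_inner_add_self_ge:
  assumes "square_integrable M f" "square_integrable M g"
  shows "L2_inner M f f - 2 * (L2_norm M f * L2_norm M g) \<le> L2_inner M (\<lambda>x. f x + g x) (\<lambda>x. f x + g x)"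
proof -
  have "L2_inner M (\<lambda>x. f x + g x) (\<lambda>x. f x + g x) = L2_inner M f f + 2 * L2_inner M f g + L2_inner M g g"
    using assms by (simp add: L2_inner_add_left L2_inner_add_right square_integrable_add
        L2_inner_commute[of M g f])
  then show ?thesis
    using L2_Cauchy_Schwarz[OF assms] L2_inner_self_nonneg[of M g] by linarith
qed

lemma L2_inner_sum_ge_term:
  assumes "finite I" "i \<in> I" and sq: "\<And>j. j \<in> I \<Longrightarrow> square_integrable M (f j)"
    and nonneg: "\<And>j k. j \<in> I \<Longrightarrow> k \<in> I \<Longrightarrow> 0 \<le> L2_inner M (f j) (f k)"
  shows "L2_inner M (f i) (f i) \<le> L2_inner M (\<lambda>x. \<Sum>j\<in>I. f j x) (\<lambda>x. \<Sum>j\<in>I. f j x)"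
proof -
  have "L2_inner M (f i) (f i) \<le> (\<Sum>k\<in>I. L2_inner M (f i) (f k))"
    using assms by (intro member_le_sum) auto
  also have "\<dots> \<le> (\<Sum>j\<in>I. \<Sum>k\<in>I. L2_inner M (f j) (f k))"
    using assms by (intro member_le_sum[where f = "\<lambda>j. \<Sum>k\<in>I. L2_inner M (f j) (f k)"] sum_nonneg) auto
  also have "\<dots> = L2_inner M (\<lambda>x. \<Sum>j\<in>I. f j x) (\<lambda>x. \<Sum>j\<in>I. f j x)"
    using sq by (simp add: L2_inner_sum_left L2_inner_sum_right square_integrable_sum)
  finally show ?thesis .
qed

lemma L2_norm_triangle:
  assumes f: "square_integrable M f" and g: "square_integrable M g"
  shows "L2_norm M (\<lambda>x. f x + g x) \<le> L2_norm M f + L2_norm M g"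
proof -
  have "(L2_norm M (\<lambda>x. f x + g x))\<^sup>2 = L2_inner M f f + 2 * L2_inner M f g + L2_inner M g g"
    using f g
    by (simp add: L2_norm_square L2_inner_add_left L2_inner_add_right square_integrable_add
        L2_inner_commute[of M g f])
  also have "\<dots> \<le> (L2_norm M f + L2_norm M g)\<^sup>2"
    using L2_Cauchy_Schwarz[OF f g] by (simp add: power2_sum L2_norm_square)
  finally show ?thesis
    using L2_norm_nonneg by (meson add_nonneg_nonneg power2_le_imp_le)
qed

lemma L2_norm_triangle_diff:
  assumes "square_integrable M f" "square_integrable M g"
  shows "L2_norm M (\<lambda>x. f x - g x) \<le> L2_norm M f + L2_norm M g"
  using L2_norm_triangle[OF assms(1) square_integrable_cmult[OF assms(2), of "-1"]]
    L2_norm_cmult[of M "-1" g] by simp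

lemma L2_norm_sum_le:
  "(\<And>i. i \<in> I \<Longrightarrow> square_integrable M (f i)) \<Longrightarrow>
    L2_norm M (\<lambda>x. \<Sum>i\<in>I. f i x) \<le> (\<Sum>i\<in>I. L2_norm M (f i))"
proof (induction I rule: infinite_finite_induct)
  case (insert i I)
  have "L2_norm M (\<lambda>x. \<Sum>j\<in>insert i I. f j x) \<le> L2_norm M (f i) + L2_norm M (\<lambda>x. \<Sum>j\<in>I. f j x)"
    using insert by (auto intro!: L2_norm_triangle square_integrable_sum)
  then show ?case using insert by simp
qed (simp_all add: L2_norm_def L2_inner_def)

lemma square_integrable_AE_limit:
  fixes S :: "nat \<Rightarrow> 'a \<Rightarrow> real"
  assumes sq: "\<And>k. square_integrable M (S k)" and bound: "\<And>k. (\<integral>x. (S k x)\<^sup>2 \<partial>M) \<le> A"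
    and F_meas: "F \<in> borel_measurable M" and lim: "AE x in M. (\<lambda>k. S k x) \<longlonglongrightarrow> F x"
  shows "square_integrable M F" and "(\<integral>x. (F x)\<^sup>2 \<partial>M) \<le> A"
proof -
  have [measurable]: "S k \<in> borel_measurable M" for k
    using sq by (rule square_integrable_measurable)
  note [measurable] = F_meas
  have "0 \<le> (\<integral>x. (S 0 x)\<^sup>2 \<partial>M)" by (simp add: integral_nonneg_AE)
  with bound[of 0] have "A \<ge> 0" by linarith
  have "AE x in M. (\<lambda>k. ennreal ((S k x)\<^sup>2)) \<longlonglongrightarrow> ennreal ((F x)\<^sup>2)"
    using lim by eventually_elim (intro tendsto_ennrealI tendsto_power)
  then have "(\<integral>\<^sup>+ x. ennreal ((F x)\<^sup>2) \<partial>M) = (\<integral>\<^sup>+ x. liminf (\<lambda>k. ennreal ((S k x)\<^sup>2)) \<partial>M)"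
    by (intro nn_integral_cong_AE) (elim eventually_mono, metis lim_imp_Liminf sequentially_bot)
  also have "\<dots> \<le> liminf (\<lambda>k. \<integral>\<^sup>+ x. ennreal ((S k x)\<^sup>2) \<partial>M)"
    by (intro nn_integral_liminf) measurable
  also have "\<dots> = liminf (\<lambda>k. ennreal (\<integral>x. (S k x)\<^sup>2 \<partial>M))"
    using sq by (simp add: square_integrable_def nn_integral_eq_integral)
  also have "\<dots> \<le> limsup (\<lambda>k. ennreal (\<integral>x. (S k x)\<^sup>2 \<partial>M))"
    by (intro Liminf_le_Limsup) simp
  also have "\<dots> \<le> ennreal A"
    using bound by (intro Limsup_bounded always_eventually) (auto intro: ennreal_leI)
  finally have F_nn: "(\<integral>\<^sup>+ x. ennreal ((F x)\<^sup>2) \<partial>M) \<le> ennreal A" .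
  have F_int: "integrable M (\<lambda>x. (F x)\<^sup>2)"
  proof (rule integrableI_nonneg)
    show "(\<integral>\<^sup>+ x. ennreal ((F x)\<^sup>2) \<partial>M) < \<infinity>"
      using F_nn by (rule le_less_trans) simp
  qed auto
  then show "square_integrable M F" using F_meas by (simp add: square_integrable_def)
  show "(\<integral>x. (F x)\<^sup>2 \<partial>M) \<le> A"
    using F_nn nn_integral_eq_integral[OF F_int] \<open>A \<ge> 0\<close> by (simp add: ennreal_le_iff)
qed

lemma square_integrable_suminf:
  fixes f :: "nat \<Rightarrow> 'a \<Rightarrow> real"
  assumes sq: "\<And>n. square_integrable M (f n)" and bound: "\<And>n. L2_norm M (f n) \<le> c n"
    and "summable c" and summable_AE: "AE x in M. summable (\<lambda>n. f n x)"
  shows "square_integrable M (\<lambda>x. \<Sum>n. f n x)" and "L2_norm M (\<lambda>x. \<Sum>n. f n x) \<le> (\<Sum>n. c n)"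
proof -
  define S where "S k x = (\<Sum>n<k. f n x)" for k x
  have [measurable]: "f n \<in> borel_measurable M" for n
    using sq by (rule square_integrable_measurable)
  have "0 \<le> c n" for n using bound L2_norm_nonneg order_trans by blast
  then have c_sum: "0 \<le> (\<Sum>n. c n)" "(\<Sum>n<k. c n) \<le> (\<Sum>n. c n)" for k
    using \<open>summable c\<close> by (auto intro: suminf_nonneg sum_le_suminf)
  have S_sq: "square_integrable M (S k)" for k
    unfolding S_def using sq by (intro square_integrable_sum)
  have S_bound: "(\<integral>x. (S k x)\<^sup>2 \<partial>M) \<le> (\<Sum>n. c n)\<^sup>2" for k
  proof -
    have "L2_norm M (S k) \<le> (\<Sum>n<k. c n)"
      unfolding S_def using sq bound by (intro order_trans[OF L2_norm_sum_le] sum_mono) auto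
    then have "(L2_norm M (S k))\<^sup>2 \<le> (\<Sum>n. c n)\<^sup>2"
      using c_sum L2_norm_nonneg by (intro power_mono) (auto intro: order_trans)
    then show ?thesis by (simp add: L2_norm_square L2_inner_self_eq_integral_square)
  qed
  moreover have "AE x in M. (\<lambda>k. S k x) \<longlonglongrightarrow> (\<Sum>n. f n x)"
    using summable_AE by eventually_elim (simp add: S_def summable_LIMSEQ)
  ultimately have limit: "square_integrable M (\<lambda>x. \<Sum>n. f n x)"
    "(\<integral>x. (\<Sum>n. f n x)\<^sup>2 \<partial>M) \<le> (\<Sum>n. c n)\<^sup>2"
    using square_integrable_AE_limit[OF S_sq S_bound, of "\<lambda>x. \<Sum>n. f n x"] by simp_all
  then show "square_integrable M (\<lambda>x. \<Sum>n. f n x)" by simp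
  from limit(2) have "(L2_norm M (\<lambda>x. \<Sum>n. f n x))\<^sup>2 \<le> (\<Sum>n. c n)\<^sup>2"
    by (simp add: L2_norm_square L2_inner_self_eq_integral_square)
  from power2_le_imp_le[OF this c_sum(1)] show "L2_norm M (\<lambda>x. \<Sum>n. f n x) \<le> (\<Sum>n. c n)" .
qed

lemma frac_diff_frac: "frac (frac a - frac b) = frac (a - b)"
  using frac_diff[of a b] by simp

lemma geometric_sum_le: "0 \<le> r \<Longrightarrow> r < 1 \<Longrightarrow> (\<Sum>n<N. r ^ n) \<le> 1 / (1 - r)" for r :: real
  by (simp add: sum_gp_strict divide_right_mono)

lemma powr_power_mult: "0 < c \<Longrightarrow> 0 \<le> h \<Longrightarrow> (c ^ n * h) powr a = (c powr a) ^ n * h powr a"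
  for c h a :: real
  by (simp add: powr_mult powr_realpow[symmetric] powr_powr powr_power mult.commute)

lemma exists_first_power_ge:
  fixes c h :: real
  assumes "1 < c" "0 < h" "c ^ k * h < 1"
  obtains N where "k < N" "1 \<le> c ^ N * h" "\<And>n. n < N \<Longrightarrow> c ^ n * h < 1"
proof -
  obtain m where "1 / h < c ^ m" using real_arch_pow[OF assms(1)] by blast
  then have ex: "\<exists>n. 1 \<le> c ^ n * h" using assms by (auto simp: field_simps intro!: exI[of _ m])
  define N where "N = (LEAST n. 1 \<le> c ^ n * h)"
  have N: "1 \<le> c ^ N * h" unfolding N_def using ex by (rule LeastI_ex)
  have below: "c ^ n * h < 1" if "n < N" for n
    using not_less_Least[OF that[unfolded N_def]] by simp
  have "k < N"
  proof (rule ccontr)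
    assume "\<not> k < N"
    then have "c ^ N * h \<le> c ^ k * h" using assms by (intro mult_right_mono power_increasing) auto
    then show False using N assms(3) by simp
  qed
  with N below show ?thesis using that by blast
qed

lemma holder_on_unit_interval_smaller_exponent:
  assumes "holder_on {0..1} \<tau> f" "\<sigma> \<le> \<tau>"
  obtains C where "0 < C" "\<And>x y. x \<in> {0..1} \<Longrightarrow> y \<in> {0..1} \<Longrightarrow> \<bar>f x - f y\<bar> \<le> C * \<bar>x - y\<bar> powr \<sigma>"
proof -
  obtain C where C: "\<And>x y. x \<in> {0..1} \<Longrightarrow> y \<in> {0..1} \<Longrightarrow> \<bar>f x - f y\<bar> \<le> C * \<bar>x - y\<bar> powr \<tau>"
    using assms(1) unfolding holder_on_def by blast
  show ?thesis
  proof (rule that[of "max C 1"])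
    fix x y :: real assume xy: "x \<in> {0..1}" "y \<in> {0..1}"
    have "C * \<bar>x - y\<bar> powr \<tau> \<le> max C 1 * \<bar>x - y\<bar> powr \<tau>" by (intro mult_right_mono) auto
    also have "\<dots> \<le> max C 1 * \<bar>x - y\<bar> powr \<sigma>"
      using xy assms(2) by (intro mult_left_mono powr_mono') auto
    finally show "\<bar>f x - f y\<bar> \<le> max C 1 * \<bar>x - y\<bar> powr \<sigma>" using C[OF xy] by linarith
  qed simp
qed

lemma exists_exponent_above_half:
  fixes \<alpha> \<tau> :: real and b :: nat
  assumes "1/2 < \<tau>" "0 < \<alpha>" "\<alpha>\<^sup>2 * real b < 1" "0 < b"
  obtains \<sigma> where "1/2 < \<sigma>" "\<sigma> \<le> \<tau>" "\<alpha> * real b powr \<sigma> < 1"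
proof -
  have "\<alpha> * real b powr (1/2) < 1"
  proof -
    have "(\<alpha> * sqrt (real b))\<^sup>2 < 1\<^sup>2" using assms(3) by (simp add: power_mult_distrib)
    then show ?thesis using assms(2) by (simp add: powr_half_sqrt power_less_imp_less_base)
  qed
  moreover have "((\<lambda>\<sigma>. \<alpha> * real b powr \<sigma>) \<longlongrightarrow> \<alpha> * real b powr (1/2)) (at_right (1/2))"
    using assms(4) by (intro tendsto_intros) auto
  ultimately have "\<forall>\<^sub>F \<sigma> in at_right (1/2). \<alpha> * real b powr \<sigma> < 1"
    by (rule order_tendstoD(2)[rotated])
  moreover have "\<forall>\<^sub>F \<sigma> in at_right (1/2). \<sigma> \<in> {1/2<..<\<tau>}"
    using assms(1) by (rule eventually_at_right_real)
  ultimately obtain \<sigma> where "\<alpha> * real b powr \<sigma> < 1" "\<sigma> \<in> {1/2<..<\<tau>}"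
    using eventually_happens'[OF trivial_limit_at_right_real eventually_conj] by blast
  then show ?thesis using that by auto
qed

section \<open>Brownian increments along the circle\<close>

(* For q \<le> p and q' \<le> p' this is the length of [q,p] \<inter> [q',p'], the covariance of the
   increments of W over the two intervals. *)
definition overlap :: "real \<Rightarrow> real \<Rightarrow> real \<Rightarrow> real \<Rightarrow> real" where
  "overlap p q p' q' = min p p' - min p q' - min q p' + min q q'"

lemma overlap_nonneg: "q \<le> p \<Longrightarrow> q' \<le> p' \<Longrightarrow> 0 \<le> overlap p q p' q'"
  by (auto simp: overlap_def min_def)

(* The increment of W along the arc from y to x of the circle [0,1); an arc that wraps
   around is split at 0. *)
definition circle_increment :: "(real \<Rightarrow> 'a \<Rightarrow> real) \<Rightarrow> real \<Rightarrow> real \<Rightarrow> 'a \<Rightarrow> real" where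
  "circle_increment W x y \<omega> =
    (if y \<le> x then W x \<omega> - W y \<omega> else (W x \<omega> - W 0 \<omega>) + (W 1 \<omega> - W y \<omega>))"

lemma circle_increment_split:
  fixes W :: "real \<Rightarrow> 'a \<Rightarrow> real"
  assumes "x \<in> {0..<1}" "y \<in> {0..<1}"
  obtains p q p' q' where "0 \<le> q" "q \<le> p" "p \<le> q'" "q' \<le> p'" "p' \<le> 1"
    and "(p - q) + (p' - q') = frac (x - y)"
    and "circle_increment W x y = (\<lambda>\<omega>. (W p \<omega> - W q \<omega>) + (W p' \<omega> - W q' \<omega>))"
proof (cases "y \<le> x")
  case True
  with assms show ?thesis
    by (intro that[where p=0 and q=0 and p'=x and q'=y]) (auto simp: circle_increment_def fun_eq_iff frac_eq)
next
  case False
  with assms have "frac (x - y) = x + 1 - y"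
    using frac_diff_neg[of x y] by simp
  with assms False show ?thesis
    by (intro that[where p=x and q=0 and p'=1 and q'=y]) (auto simp: circle_increment_def fun_eq_iff)
qed

locale brownian_motion =
  fixes M :: "'a measure" and W :: "real \<Rightarrow> 'a \<Rightarrow> real"
  assumes std_brownian_motion: "std_brownian_motion M W"
begin

sublocale prob_space M
  using std_brownian_motion by (simp add: std_brownian_motion_def)

lemma measurable_W[measurable]: "W t \<in> borel_measurable M"
  using std_brownian_motion by (simp add: std_brownian_motion_def)

lemma AE_W_0: "AE \<omega> in M. W 0 \<omega> = 0"
  using std_brownian_motion by (simp add: std_brownian_motion_def)

lemma AE_continuous_paths: "AE \<omega> in M. continuous_on {0..} (\<lambda>t. W t \<omega>)"
  using std_brownian_motion by (simp add: std_brownian_motion_def)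

lemma increment_distributed:
  "0 \<le> s \<Longrightarrow> s < t \<Longrightarrow>
    distributed M lborel (\<lambda>\<omega>. W t \<omega> - W s \<omega>) (normal_density 0 (sqrt (t - s)))"
  using std_brownian_motion by (simp add: std_brownian_motion_def)

lemma independent_increments:
  "0 \<le> u 0 \<Longrightarrow> (\<forall>i<n. u i < u (Suc i)) \<Longrightarrow>
    indep_vars (\<lambda>_. borel) (\<lambda>i \<omega>. W (u (Suc i)) \<omega> - W (u i) \<omega>) {..<n}"
  using std_brownian_motion unfolding std_brownian_motion_def by blast

lemma increment_moments:
  assumes "0 \<le> s" "s < t"
  shows "integrable M (\<lambda>\<omega>. W t \<omega> - W s \<omega>)" "expectation (\<lambda>\<omega>. W t \<omega> - W s \<omega>) = 0"
    and "square_integrable M (\<lambda>\<omega>. W t \<omega> - W s \<omega>)"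
    and "expectation (\<lambda>\<omega>. (W t \<omega> - W s \<omega>)\<^sup>2) = t - s"
proof -
  note distr = increment_distributed[OF assms]
  have sigma: "0 < sqrt (t - s)" using assms by simp
  have "integrable lborel (\<lambda>x. normal_density 0 (sqrt (t - s)) x * x)"
    using sigma by (rule integrable_normal_moment_nz_1)
  then show "integrable M (\<lambda>\<omega>. W t \<omega> - W s \<omega>)"
    using distributed_integrable[OF distr, of "\<lambda>x. x"] by simp
  show mean: "expectation (\<lambda>\<omega>. W t \<omega> - W s \<omega>) = 0"
    using normal_distributed_expectation[OF sigma distr] .
  have "integrable lborel (\<lambda>x. normal_density 0 (sqrt (t - s)) x * x\<^sup>2)"
    using integrable_normal_moment[where k=2 and \<mu>=0 and \<sigma>="sqrt (t - s)"] sigma by simp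
  then show "square_integrable M (\<lambda>\<omega>. W t \<omega> - W s \<omega>)"
    using distributed_integrable[OF distr, of "\<lambda>x. x\<^sup>2"] by (simp add: square_integrable_def)
  show "expectation (\<lambda>\<omega>. (W t \<omega> - W s \<omega>)\<^sup>2) = t - s"
    using normal_distributed_variance[OF sigma distr] mean assms by simp
qed

lemma W_AE_eq_increment: "AE \<omega> in M. W t \<omega> = W t \<omega> - W 0 \<omega>"
  using AE_W_0 by eventually_elim simp

lemma square_integrable_W: "0 \<le> t \<Longrightarrow> square_integrable M (W t)"
proof (cases "t = 0")
  case True
  have "square_integrable M (\<lambda>_. 0)" by (simp add: square_integrable_def)
  moreover have "AE \<omega> in M. 0 = W 0 \<omega>" using AE_W_0 by eventually_elim simp
  ultimately show ?thesis
    unfolding True by (rule square_integrable_cong_AE[OF _ measurable_W])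
next
  case False
  assume "0 \<le> t"
  then have "square_integrable M (\<lambda>\<omega>. W t \<omega> - W 0 \<omega>)"
    using False by (intro increment_moments(3)) simp_all
  moreover have "AE \<omega> in M. W t \<omega> - W 0 \<omega> = W t \<omega>" using AE_W_0 by eventually_elim simp
  ultimately show ?thesis by (rule square_integrable_cong_AE[OF _ measurable_W])
qed

lemma L2_inner_W_0: "g \<in> borel_measurable M \<Longrightarrow> L2_inner M (W 0) g = 0"
  using L2_inner_cong_AE[of "W 0" M "\<lambda>_. 0" g g] AE_W_0 by (simp add: L2_inner_def)

lemma L2_inner_W_self: "0 \<le> u \<Longrightarrow> L2_inner M (W u) (W u) = u"
proof (cases "u = 0")
  case False
  assume "0 \<le> u"
  have "L2_inner M (W u) (W u) = L2_inner M (\<lambda>\<omega>. W u \<omega> - W 0 \<omega>) (\<lambda>\<omega>. W u \<omega> - W 0 \<omega>)"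
    using W_AE_eq_increment by (intro L2_inner_cong_AE) auto
  then show ?thesis
    using increment_moments(4)[of 0 u] \<open>0 \<le> u\<close> False
    by (simp add: L2_inner_self_eq_integral_square)
qed (simp add: L2_inner_W_0)

lemma L2_inner_W_increment:
  assumes "0 < u" "u < v"
  shows "L2_inner M (W u) (\<lambda>\<omega>. W v \<omega> - W u \<omega>) = 0"
proof -
  define U :: "nat \<Rightarrow> real" where "U i = (if i = 0 then 0 else if i = 1 then u else v)" for i
  have "indep_vars (\<lambda>_. borel) (\<lambda>i \<omega>. W (U (Suc i)) \<omega> - W (U i) \<omega>) {..<2}"
    using independent_increments[of U 2] assms by (auto simp: U_def less_2_cases_iff)
  then have "expectation (\<lambda>\<omega>. \<Prod>i<2. W (U (Suc i)) \<omega> - W (U i) \<omega>) =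
      (\<Prod>i<2. expectation (\<lambda>\<omega>. W (U (Suc i)) \<omega> - W (U i) \<omega>))"
    using assms by (intro indep_vars_lebesgue_integral)
      (auto simp: U_def less_2_cases_iff intro: increment_moments(1))
  also have "\<dots> = 0" using assms by (simp add: numeral_2_eq_2 U_def increment_moments(2))
  finally have "L2_inner M (\<lambda>\<omega>. W u \<omega> - W 0 \<omega>) (\<lambda>\<omega>. W v \<omega> - W u \<omega>) = 0"
    by (simp add: numeral_2_eq_2 U_def L2_inner_def)
  moreover have "L2_inner M (W u) (\<lambda>\<omega>. W v \<omega> - W u \<omega>) =
      L2_inner M (\<lambda>\<omega>. W u \<omega> - W 0 \<omega>) (\<lambda>\<omega>. W v \<omega> - W u \<omega>)"
    using W_AE_eq_increment by (intro L2_inner_cong_AE) auto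
  ultimately show ?thesis by simp
qed

lemma covariance_W: "0 \<le> u \<Longrightarrow> 0 \<le> v \<Longrightarrow> L2_inner M (W u) (W v) = min u v"
proof (induction u v rule: linorder_wlog)
  case (le u v)
  show ?case
  proof (cases "u = 0 \<or> u = v")
    case True
    then show ?thesis using le L2_inner_W_0 L2_inner_W_self by auto
  next
    case False
    then have "0 < u" "u < v" using le by auto
    have "L2_inner M (W u) (W v) = L2_inner M (W u) (\<lambda>\<omega>. W u \<omega> + (W v \<omega> - W u \<omega>))" by simp
    also have "\<dots> = u"
      using \<open>0 < u\<close> \<open>u < v\<close> L2_inner_W_increment L2_inner_W_self
      by (subst L2_inner_add_right) (auto intro: square_integrable_W increment_moments(3))
    finally show ?thesis using le by simp
  qed
qed (simp add: L2_inner_commute min.commute)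

lemma square_integrable_increment:
  "0 \<le> p \<Longrightarrow> 0 \<le> q \<Longrightarrow> square_integrable M (\<lambda>\<omega>. W p \<omega> - W q \<omega>)"
  by (intro square_integrable_diff square_integrable_W)

lemma L2_inner_increments:
  assumes "0 \<le> p" "0 \<le> q" "0 \<le> p'" "0 \<le> q'"
  shows "L2_inner M (\<lambda>\<omega>. W p \<omega> - W q \<omega>) (\<lambda>\<omega>. W p' \<omega> - W q' \<omega>) = overlap p q p' q'"
  using assms
  by (simp add: L2_inner_diff_left L2_inner_diff_right square_integrable_W
      square_integrable_increment covariance_W overlap_def)

lemma L2_inner_sum_of_increments:
  assumes "0 \<le> p" "0 \<le> q" "0 \<le> p'" "0 \<le> q'" "0 \<le> r" "0 \<le> s" "0 \<le> r'" "0 \<le> s'"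
  shows "L2_inner M (\<lambda>\<omega>. (W p \<omega> - W q \<omega>) + (W p' \<omega> - W q' \<omega>))
                    (\<lambda>\<omega>. (W r \<omega> - W s \<omega>) + (W r' \<omega> - W s' \<omega>))
       = overlap p q r s + overlap p q r' s' + overlap p' q' r s + overlap p' q' r' s'"
  using assms
  by (simp add: L2_inner_add_left L2_inner_add_right square_integrable_add
      square_integrable_increment L2_inner_increments)

lemma L2_inner_circle_increment_nonneg:
  assumes "x \<in> {0..<1}" "y \<in> {0..<1}" "x' \<in> {0..<1}" "y' \<in> {0..<1}"
  shows "0 \<le> L2_inner M (circle_increment W x y) (circle_increment W x' y')"
proof -
  obtain p q p' q' where pq: "0 \<le> q" "q \<le> p" "p \<le> q'" "q' \<le> p'" "p' \<le> 1"
    and "(p - q) + (p' - q') = frac (x - y)"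
    and eq: "circle_increment W x y = (\<lambda>\<omega>. (W p \<omega> - W q \<omega>) + (W p' \<omega> - W q' \<omega>))"
    by (rule circle_increment_split[OF assms(1,2)])
  obtain r s r' s' where rs: "0 \<le> s" "s \<le> r" "r \<le> s'" "s' \<le> r'" "r' \<le> 1"
    and "(r - s) + (r' - s') = frac (x' - y')"
    and eq': "circle_increment W x' y' = (\<lambda>\<omega>. (W r \<omega> - W s \<omega>) + (W r' \<omega> - W s' \<omega>))"
    by (rule circle_increment_split[OF assms(3,4)])
  show ?thesis
    unfolding eq eq' using pq rs by (simp add: L2_inner_sum_of_increments overlap_nonneg)
qed

lemma L2_inner_circle_increment_self:
  assumes "x \<in> {0..<1}" "y \<in> {0..<1}"
  shows "L2_inner M (circle_increment W x y) (circle_increment W x y) = frac (x - y)"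
proof -
  obtain p q p' q' where pq: "0 \<le> q" "q \<le> p" "p \<le> q'" "q' \<le> p'" "p' \<le> 1"
    and len: "(p - q) + (p' - q') = frac (x - y)"
    and eq: "circle_increment W x y = (\<lambda>\<omega>. (W p \<omega> - W q \<omega>) + (W p' \<omega> - W q' \<omega>))"
    by (rule circle_increment_split[OF assms])
  have "L2_inner M (circle_increment W x y) (circle_increment W x y) = (p - q) + (p' - q')"
    unfolding eq using pq by (simp add: L2_inner_sum_of_increments overlap_def min_def)
  with len show ?thesis by simp
qed

lemma square_integrable_circle_increment:
  assumes "x \<in> {0..<1}" "y \<in> {0..<1}"
  shows "square_integrable M (circle_increment W x y)"
proof -
  obtain p q p' q' where "0 \<le> q" "q \<le> p" "p \<le> q'" "q' \<le> p'" "p' \<le> 1"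
    and "(p - q) + (p' - q') = frac (x - y)"
    and eq: "circle_increment W x y = (\<lambda>\<omega>. (W p \<omega> - W q \<omega>) + (W p' \<omega> - W q' \<omega>))"
    by (rule circle_increment_split[OF assms])
  then show ?thesis
    unfolding eq by (intro square_integrable_add square_integrable_increment) simp_all
qed

end

section \<open>The bridge series\<close>

(* The Hoelder exponent \<sigma> is lowered, if necessary, so that \<alpha> b^\<sigma> < 1 (possible as \<alpha> sqrt b < 1):
   then the \<kappa>-corrections of the levels below N sum to O(h^\<sigma>) = o(sqrt h). *)
locale bridge_series = brownian_motion M W for M :: "'a measure" and W +
  fixes \<kappa> :: "real \<Rightarrow> real" and \<alpha> :: real and b :: nat and C \<sigma> :: real
  assumes kappa_range: "\<And>x. x \<in> {0..1} \<Longrightarrow> \<kappa> x \<in> {0..1}"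
    and kappa_0: "\<kappa> 0 = 0" and kappa_1: "\<kappa> 1 = 1"
    and holder: "\<And>x y. x \<in> {0..1} \<Longrightarrow> y \<in> {0..1} \<Longrightarrow> \<bar>\<kappa> x - \<kappa> y\<bar> \<le> C * \<bar>x - y\<bar> powr \<sigma>"
    and C_pos: "0 < C" and sigma: "1/2 < \<sigma>"
    and alpha: "0 < \<alpha>" "\<alpha> < 1" and b: "2 \<le> b"
    and alpha_sq_b: "\<alpha>\<^sup>2 * real b < 1" and alpha_b_sigma: "\<alpha> * real b powr \<sigma> < 1"
begin

abbreviation B :: "real \<Rightarrow> 'a \<Rightarrow> real" where "B \<equiv> bridge W \<kappa>"

abbreviation X :: "real \<Rightarrow> 'a \<Rightarrow> real" where "X \<equiv> Xproc \<alpha> b W \<kappa>"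

lemma measurable_B[measurable]: "B u \<in> borel_measurable M"
  unfolding bridge_def[abs_def] by measurable

lemma square_integrable_B: "0 \<le> u \<Longrightarrow> square_integrable M (B u)"
  unfolding bridge_def[abs_def]
  by (intro square_integrable_diff square_integrable_cmult square_integrable_W) simp_all

lemma L2_norm_W: "0 \<le> u \<Longrightarrow> L2_norm M (W u) = sqrt u"
  by (simp add: L2_norm_def L2_inner_W_self)

lemma L2_norm_B_le: "u \<in> {0..1} \<Longrightarrow> L2_norm M (B u) \<le> 2"
proof -
  assume u: "u \<in> {0..1}"
  have "L2_norm M (B u) \<le> L2_norm M (W u) + L2_norm M (\<lambda>\<omega>. \<kappa> u * W 1 \<omega>)"
    unfolding bridge_def[abs_def] using u
    by (intro L2_norm_triangle_diff square_integrable_cmult square_integrable_W) simp_all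
  also have "\<dots> = sqrt u + \<bar>\<kappa> u\<bar>" using u by (simp add: L2_norm_cmult L2_norm_W)
  also have "\<dots> \<le> 2"
  proof -
    have "sqrt u \<le> 1" "\<bar>\<kappa> u\<bar> \<le> 1" using u kappa_range[OF u] by auto
    then show ?thesis by linarith
  qed
  finally show ?thesis .
qed

lemma L2_norm_B_diff_le: "x \<in> {0..1} \<Longrightarrow> y \<in> {0..1} \<Longrightarrow> L2_norm M (\<lambda>\<omega>. B x \<omega> - B y \<omega>) \<le> 4"
  using L2_norm_triangle_diff[OF square_integrable_B square_integrable_B, of x y]
    L2_norm_B_le[of x] L2_norm_B_le[of y] by simp

(* On a wrapping arc the difference is (1 + \<kappa> x - \<kappa> y) W 1 - W 0, and \<kappa> 0 = 0, \<kappa> 1 = 1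
   split the coefficient into the two Hoelder differences \<kappa> x - \<kappa> 0 and \<kappa> 1 - \<kappa> y. *)
lemma L2_norm_circle_increment_minus_B_diff:
  assumes x: "x \<in> {0..<1}" and y: "y \<in> {0..<1}"
  shows "L2_norm M (\<lambda>\<omega>. circle_increment W x y \<omega> - (B x \<omega> - B y \<omega>)) \<le> 2 * C * frac (x - y) powr \<sigma>"
proof (cases "y \<le> x")
  case True
  then have d: "frac (x - y) = x - y" using x y by (simp add: frac_eq)
  have "(\<lambda>\<omega>. circle_increment W x y \<omega> - (B x \<omega> - B y \<omega>)) = (\<lambda>\<omega>. (\<kappa> x - \<kappa> y) * W 1 \<omega>)"
    using True by (simp add: fun_eq_iff circle_increment_def bridge_def algebra_simps)
  moreover have "\<bar>\<kappa> x - \<kappa> y\<bar> \<le> C * frac (x - y) powr \<sigma>"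
    using holder[of x y] x y True d by simp
  ultimately show ?thesis using C_pos by (simp add: L2_norm_cmult L2_norm_W)
next
  case False
  then have d: "frac (x - y) = x + 1 - y" using frac_diff_neg[of x y] x y by simp
  have "L2_norm M (\<lambda>\<omega>. circle_increment W x y \<omega> - (B x \<omega> - B y \<omega>))
      = L2_norm M (\<lambda>\<omega>. (1 + \<kappa> x - \<kappa> y) * W 1 \<omega> - W 0 \<omega>)"
    using False by (simp add: circle_increment_def bridge_def algebra_simps)
  also have "\<dots> \<le> L2_norm M (\<lambda>\<omega>. (1 + \<kappa> x - \<kappa> y) * W 1 \<omega>) + L2_norm M (W 0)"
    by (intro L2_norm_triangle_diff square_integrable_cmult square_integrable_W) simp_all
  also have "\<dots> = \<bar>(\<kappa> x - \<kappa> 0) + (\<kappa> 1 - \<kappa> y)\<bar>"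
    by (simp add: L2_norm_cmult L2_norm_W kappa_0 kappa_1)
  also have "\<dots> \<le> C * \<bar>x - 0\<bar> powr \<sigma> + C * \<bar>1 - y\<bar> powr \<sigma>"
    using holder[of x 0] holder[of 1 y] x y by simp
  also have "\<dots> \<le> C * frac (x - y) powr \<sigma> + C * frac (x - y) powr \<sigma>"
    using x y d C_pos sigma by (intro add_mono mult_left_mono powr_mono2) auto
  finally show ?thesis by simp
qed

lemma L2_norm_B_diff_le_sqrt:
  assumes x: "x \<in> {0..<1}" and y: "y \<in> {0..<1}"
  shows "L2_norm M (\<lambda>\<omega>. B x \<omega> - B y \<omega>) \<le> (1 + 2 * C) * sqrt (frac (x - y))"
proof -
  let ?d = "frac (x - y)"
  have d: "0 \<le> ?d" "?d \<le> 1" using frac_lt_1[of "x - y"] by auto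
  have "L2_norm M (\<lambda>\<omega>. B x \<omega> - B y \<omega>) \<le> L2_norm M (circle_increment W x y)
      + L2_norm M (\<lambda>\<omega>. circle_increment W x y \<omega> - (B x \<omega> - B y \<omega>))"
    using L2_norm_triangle_diff[of M "circle_increment W x y"
        "\<lambda>\<omega>. circle_increment W x y \<omega> - (B x \<omega> - B y \<omega>)"] x y
    by (simp add: square_integrable_circle_increment square_integrable_diff square_integrable_B)
  also have "\<dots> \<le> sqrt ?d + 2 * C * ?d powr \<sigma>"
    using L2_norm_circle_increment_minus_B_diff[OF x y] x y
    by (simp add: L2_norm_def L2_inner_circle_increment_self)
  also have "\<dots> \<le> sqrt ?d + 2 * C * sqrt ?d"
  proof -
    have "?d powr \<sigma> \<le> ?d powr (1/2)" using d sigma by (intro powr_mono') auto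
    then show ?thesis using d C_pos by (simp add: powr_half_sqrt)
  qed
  finally show ?thesis by (simp add: algebra_simps)
qed

lemma AE_bounded_B: "AE \<omega> in M. \<exists>K. \<forall>u\<in>{0..1}. \<bar>B u \<omega>\<bar> \<le> K"
  using AE_continuous_paths
proof eventually_elim
  case (elim \<omega>)
  then have "continuous_on {0..1} (\<lambda>t. W t \<omega>)" by (rule continuous_on_subset) auto
  then have "compact ((\<lambda>t. W t \<omega>) ` {0..1})" by (intro compact_continuous_image) (simp_all add: compact_Icc)
  then obtain K where K: "\<forall>w\<in>(\<lambda>t. W t \<omega>) ` {0..1}. norm w \<le> K"
    using compact_imp_bounded bounded_iff by metis
  have "\<bar>B u \<omega>\<bar> \<le> K + K" if u: "u \<in> {0..1}" for u
  proof -
    have W_le: "\<bar>W u \<omega>\<bar> \<le> K" "\<bar>W 1 \<omega>\<bar> \<le> K" using K u by auto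
    moreover have "\<bar>\<kappa> u\<bar> \<le> 1" using kappa_range[OF u] by auto
    ultimately have "\<bar>\<kappa> u * W 1 \<omega>\<bar> \<le> 1 * K"
      unfolding abs_mult by (intro mult_mono) auto
    with W_le show ?thesis by (simp add: bridge_def)
  qed
  then show ?case by blast
qed

lemma AE_summable_X: "AE \<omega> in M. \<forall>t. summable (\<lambda>n. \<alpha> ^ n * B (frac (real b ^ n * t)) \<omega>)"
  using AE_bounded_B
proof eventually_elim
  case (elim \<omega>)
  then obtain K where K: "\<And>u. u \<in> {0..1} \<Longrightarrow> \<bar>B u \<omega>\<bar> \<le> K" by blast
  show ?case
  proof
    fix t
    have "norm (\<alpha> ^ n * B (frac (real b ^ n * t)) \<omega>) \<le> K * \<alpha> ^ n" for n
    proof -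
      have "\<bar>B (frac (real b ^ n * t)) \<omega>\<bar> \<le> K"
        using K frac_lt_1[of "real b ^ n * t"] by simp
      then show ?thesis using alpha by (simp add: abs_mult mult.commute mult_left_mono)
    qed
    moreover have "summable (\<lambda>n. K * \<alpha> ^ n)" using alpha by (intro summable_mult summable_geometric) simp
    ultimately show "summable (\<lambda>n. \<alpha> ^ n * B (frac (real b ^ n * t)) \<omega>)"
      by (rule summable_comparison_test'[rotated])
  qed
qed

lemma measurable_X[measurable]: "X t \<in> borel_measurable M"
  unfolding Xproc_def[abs_def] by measurable

definition level_increment :: "nat \<Rightarrow> real \<Rightarrow> real \<Rightarrow> 'a \<Rightarrow> real" where
  "level_increment n t s \<omega> = B (frac (real b ^ n * t)) \<omega> - B (frac (real b ^ n * s)) \<omega>"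

lemma measurable_level_increment[measurable]: "level_increment n t s \<in> borel_measurable M"
  unfolding level_increment_def[abs_def] by measurable

lemma square_integrable_level_increment: "square_integrable M (level_increment n t s)"
  unfolding level_increment_def[abs_def] by (intro square_integrable_diff square_integrable_B) simp_all

lemma L2_norm_level_increment_le_4: "L2_norm M (level_increment n t s) \<le> 4"
  unfolding level_increment_def[abs_def]
  using frac_lt_1 by (intro L2_norm_B_diff_le) (auto intro: less_imp_le)

lemma AE_X_diff_eq_suminf:
  "AE \<omega> in M. summable (\<lambda>n. \<alpha> ^ n * level_increment n t s \<omega>) \<and>
     X t \<omega> - X s \<omega> = (\<Sum>n. \<alpha> ^ n * level_increment n t s \<omega>)"
  using AE_summable_X
proof eventually_elim
  case (elim \<omega>)
  then have "summable (\<lambda>n. \<alpha> ^ n * B (frac (real b ^ n * t)) \<omega>)"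
    "summable (\<lambda>n. \<alpha> ^ n * B (frac (real b ^ n * s)) \<omega>)" by auto
  from summable_diff[OF this] suminf_diff[OF this] show ?case
    by (simp add: Xproc_def level_increment_def right_diff_distrib)
qed

lemma frac_level_diff:
  assumes "0 \<le> t - s" "real b ^ n * (t - s) < 1"
  shows "frac (frac (real b ^ n * t) - frac (real b ^ n * s)) = real b ^ n * (t - s)"
  using assms mult_left_mono[of s t "real b ^ n"] by (simp add: frac_diff_frac frac_eq right_diff_distrib)

lemma L2_norm_level_increment_le:
  assumes "s \<le> t"
  shows "L2_norm M (level_increment n t s) \<le> (4 + 2 * C) * sqrt (real b ^ n * (t - s))"
proof (cases "real b ^ n * (t - s) < 1")
  case True
  have "L2_norm M (level_increment n t s)
      \<le> (1 + 2 * C) * sqrt (frac (frac (real b ^ n * t) - frac (real b ^ n * s)))"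
    unfolding level_increment_def[abs_def] by (rule L2_norm_B_diff_le_sqrt) (simp_all add: frac_lt_1)
  also have "\<dots> = (1 + 2 * C) * sqrt (real b ^ n * (t - s))"
    using frac_level_diff[OF _ True] assms by simp
  also have "\<dots> \<le> (4 + 2 * C) * sqrt (real b ^ n * (t - s))"
    using assms by (intro mult_right_mono) auto
  finally show ?thesis .
next
  case False
  then have "4 \<le> (4 + 2 * C) * sqrt (real b ^ n * (t - s))"
    using C_pos mult_mono[of 4 "4 + 2 * C" 1 "sqrt (real b ^ n * (t - s))"] by simp
  then show ?thesis using L2_norm_level_increment_le_4 by (rule order_trans[rotated])
qed

definition q :: real where "q = \<alpha> * sqrt (real b)"

lemma q_nonneg: "0 \<le> q" and q_less_1: "q < 1"
proof -
  show "0 \<le> q" unfolding q_def using alpha by simp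
  have "q\<^sup>2 < 1\<^sup>2" using alpha_sq_b by (simp add: q_def power_mult_distrib)
  then show "q < 1" by (rule power_less_imp_less_base) simp
qed

lemma alpha_pow_mult_sqrt: "0 \<le> h \<Longrightarrow> \<alpha> ^ n * sqrt (real b ^ n * h) = q ^ n * sqrt h"
  by (simp add: q_def real_sqrt_mult real_sqrt_power power_mult_distrib)

lemma mean_square_X_diff_le:
  assumes "s \<le> t"
  shows "expectation (\<lambda>\<omega>. (X t \<omega> - X s \<omega>)\<^sup>2) \<le> ((4 + 2 * C) / (1 - q))\<^sup>2 * (t - s)"
proof -
  define F where "F = (\<lambda>\<omega>. \<Sum>n. \<alpha> ^ n * level_increment n t s \<omega>)"
  let ?c = "\<lambda>n. (4 + 2 * C) * sqrt (t - s) * q ^ n"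
  have term_le: "L2_norm M (\<lambda>\<omega>. \<alpha> ^ n * level_increment n t s \<omega>) \<le> ?c n" for n
  proof -
    have "L2_norm M (\<lambda>\<omega>. \<alpha> ^ n * level_increment n t s \<omega>) = \<alpha> ^ n * L2_norm M (level_increment n t s)"
      using alpha by (simp add: L2_norm_cmult)
    also have "\<dots> \<le> \<alpha> ^ n * ((4 + 2 * C) * sqrt (real b ^ n * (t - s)))"
      using alpha assms by (intro mult_left_mono L2_norm_level_increment_le) auto
    also have "\<dots> = (4 + 2 * C) * (\<alpha> ^ n * sqrt (real b ^ n * (t - s)))"
      by (simp add: mult_ac)
    also have "\<dots> = ?c n"
      using alpha_pow_mult_sqrt[of "t - s" n] assms by simp
    finally show ?thesis .
  qed
  have summable: "summable ?c" using q_nonneg q_less_1 by (intro summable_mult summable_geometric) auto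
  have F_norm: "L2_norm M F \<le> (\<Sum>n. ?c n)"
    unfolding F_def using term_le summable AE_X_diff_eq_suminf
    by (intro square_integrable_suminf square_integrable_cmult square_integrable_level_increment) auto
  have "(\<Sum>n. ?c n) = (4 + 2 * C) * sqrt (t - s) / (1 - q)"
    using q_nonneg q_less_1 by (simp add: suminf_mult suminf_geometric)
  then have F_norm': "L2_norm M F \<le> (4 + 2 * C) * sqrt (t - s) / (1 - q)"
    using F_norm by simp
  have "expectation (\<lambda>\<omega>. (X t \<omega> - X s \<omega>)\<^sup>2) = (L2_norm M F)\<^sup>2"
    unfolding L2_norm_square L2_inner_self_eq_integral_square[symmetric] F_def
    using AE_X_diff_eq_suminf by (intro L2_inner_cong_AE) auto
  also have "\<dots> \<le> ((4 + 2 * C) * sqrt (t - s) / (1 - q))\<^sup>2"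
    using F_norm' L2_norm_nonneg by (intro power_mono)
  also have "\<dots> = ((4 + 2 * C) / (1 - q))\<^sup>2 * (t - s)"
    using assms by (simp add: power_divide power_mult_distrib)
  finally show ?thesis .
qed

definition circle_level :: "nat \<Rightarrow> real \<Rightarrow> real \<Rightarrow> 'a \<Rightarrow> real" where
  "circle_level n t s = circle_increment W (frac (real b ^ n * t)) (frac (real b ^ n * s))"

lemma square_integrable_circle_level: "square_integrable M (circle_level n t s)"
  unfolding circle_level_def by (intro square_integrable_circle_increment) (simp_all add: frac_lt_1)

lemma L2_inner_circle_level_nonneg: "0 \<le> L2_inner M (circle_level n t s) (circle_level m t s)"
  unfolding circle_level_def by (intro L2_inner_circle_increment_nonneg) (simp_all add: frac_lt_1)

lemma L2_inner_circle_level_self: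
  "s \<le> t \<Longrightarrow> real b ^ n * (t - s) < 1 \<Longrightarrow>
    L2_inner M (circle_level n t s) (circle_level n t s) = real b ^ n * (t - s)"
  unfolding circle_level_def
  by (subst L2_inner_circle_increment_self) (simp_all add: frac_lt_1 frac_level_diff)

lemma L2_norm_circle_level_minus_level_increment:
  assumes "s \<le> t" "real b ^ n * (t - s) < 1"
  shows "L2_norm M (\<lambda>\<omega>. circle_level n t s \<omega> - level_increment n t s \<omega>)
    \<le> 2 * C * (real b powr \<sigma>) ^ n * (t - s) powr \<sigma>"
proof -
  have "L2_norm M (\<lambda>\<omega>. circle_level n t s \<omega> - level_increment n t s \<omega>)
      \<le> 2 * C * frac (frac (real b ^ n * t) - frac (real b ^ n * s)) powr \<sigma>"
    unfolding circle_level_def level_increment_def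
    by (rule L2_norm_circle_increment_minus_B_diff) (simp_all add: frac_lt_1)
  also have "\<dots> = 2 * C * (real b powr \<sigma>) ^ n * (t - s) powr \<sigma>"
    using assms b by (simp add: frac_level_diff powr_power_mult)
  finally show ?thesis .
qed

definition head_sum :: "nat \<Rightarrow> real \<Rightarrow> real \<Rightarrow> 'a \<Rightarrow> real" where
  "head_sum N t s = (\<lambda>\<omega>. \<Sum>n<N. \<alpha> ^ n * circle_level n t s \<omega>)"

definition correction_sum :: "nat \<Rightarrow> real \<Rightarrow> real \<Rightarrow> 'a \<Rightarrow> real" where
  "correction_sum N t s = (\<lambda>\<omega>. \<Sum>n<N. \<alpha> ^ n * (circle_level n t s \<omega> - level_increment n t s \<omega>))"

definition tail_sum :: "nat \<Rightarrow> real \<Rightarrow> real \<Rightarrow> 'a \<Rightarrow> real" where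
  "tail_sum N t s = (\<lambda>\<omega>. \<Sum>m. \<alpha> ^ (m + N) * level_increment (m + N) t s \<omega>)"

lemma square_integrable_head_sum: "square_integrable M (head_sum N t s)"
  unfolding head_sum_def
  by (intro square_integrable_sum square_integrable_cmult square_integrable_circle_level)

lemma square_integrable_correction_sum: "square_integrable M (correction_sum N t s)"
  unfolding correction_sum_def
  by (intro square_integrable_sum square_integrable_cmult square_integrable_diff
      square_integrable_circle_level square_integrable_level_increment)

lemma L2_inner_head_sum_ge:
  assumes "s \<le> t" "t - s < 1" "0 < N"
  shows "t - s \<le> L2_inner M (head_sum N t s) (head_sum N t s)"
proof -
  have "L2_inner M (\<lambda>\<omega>. \<alpha> ^ 0 * circle_level 0 t s \<omega>) (\<lambda>\<omega>. \<alpha> ^ 0 * circle_level 0 t s \<omega>)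
      \<le> L2_inner M (head_sum N t s) (head_sum N t s)"
    unfolding head_sum_def using assms alpha
    by (intro L2_inner_sum_ge_term square_integrable_cmult square_integrable_circle_level)
      (auto simp: L2_inner_cmult_left L2_inner_cmult_right L2_inner_circle_level_nonneg)
  then show ?thesis using assms by (simp add: L2_inner_circle_level_self)
qed

lemma L2_norm_head_sum_le:
  assumes "s \<le> t" "\<And>n. n < N \<Longrightarrow> real b ^ n * (t - s) < 1"
  shows "L2_norm M (head_sum N t s) \<le> sqrt (t - s) / (1 - q)"
proof -
  have "L2_norm M (head_sum N t s) \<le> (\<Sum>n<N. L2_norm M (\<lambda>\<omega>. \<alpha> ^ n * circle_level n t s \<omega>))"
    unfolding head_sum_def
    by (intro L2_norm_sum_le square_integrable_cmult square_integrable_circle_level)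
  also have "\<dots> = (\<Sum>n<N. sqrt (t - s) * q ^ n)"
  proof (intro sum.cong refl)
    fix n assume "n \<in> {..<N}"
    then have "L2_norm M (circle_level n t s) = sqrt (real b ^ n * (t - s))"
      using assms by (simp add: L2_norm_def L2_inner_circle_level_self)
    then show "L2_norm M (\<lambda>\<omega>. \<alpha> ^ n * circle_level n t s \<omega>) = sqrt (t - s) * q ^ n"
      using alpha assms alpha_pow_mult_sqrt[of "t - s" n] by (simp add: L2_norm_cmult)
  qed
  also have "\<dots> \<le> sqrt (t - s) * (1 / (1 - q))"
    unfolding sum_distrib_left[symmetric] using q_nonneg q_less_1 assms
    by (intro mult_left_mono geometric_sum_le) auto
  finally show ?thesis by simp
qed

lemma L2_norm_correction_sum_le:
  assumes "s \<le> t" "\<And>n. n < N \<Longrightarrow> real b ^ n * (t - s) < 1"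
  shows "L2_norm M (correction_sum N t s) \<le> 2 * C * (t - s) powr \<sigma> / (1 - \<alpha> * real b powr \<sigma>)"
proof -
  let ?r = "\<alpha> * real b powr \<sigma>"
  have "L2_norm M (correction_sum N t s)
      \<le> (\<Sum>n<N. L2_norm M (\<lambda>\<omega>. \<alpha> ^ n * (circle_level n t s \<omega> - level_increment n t s \<omega>)))"
    unfolding correction_sum_def
    by (intro L2_norm_sum_le square_integrable_cmult square_integrable_diff
        square_integrable_circle_level square_integrable_level_increment)
  also have "\<dots> \<le> (\<Sum>n<N. 2 * C * (t - s) powr \<sigma> * ?r ^ n)"
  proof (intro sum_mono)
    fix n assume "n \<in> {..<N}"
    then have "\<alpha> ^ n * L2_norm M (\<lambda>\<omega>. circle_level n t s \<omega> - level_increment n t s \<omega>)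
        \<le> \<alpha> ^ n * (2 * C * (real b powr \<sigma>) ^ n * (t - s) powr \<sigma>)"
      using alpha assms by (intro mult_left_mono L2_norm_circle_level_minus_level_increment) auto
    then show "L2_norm M (\<lambda>\<omega>. \<alpha> ^ n * (circle_level n t s \<omega> - level_increment n t s \<omega>))
        \<le> 2 * C * (t - s) powr \<sigma> * ?r ^ n"
      using alpha by (simp add: L2_norm_cmult power_mult_distrib mult_ac)
  qed
  also have "\<dots> \<le> 2 * C * (t - s) powr \<sigma> * (1 / (1 - ?r))"
    unfolding sum_distrib_left[symmetric] using alpha_b_sigma alpha C_pos
    by (intro mult_left_mono geometric_sum_le) auto
  finally show ?thesis by simp
qed

lemma tail_sum:
  shows square_integrable_tail_sum: "square_integrable M (tail_sum N t s)"
    and L2_norm_tail_sum_le: "L2_norm M (tail_sum N t s) \<le> 4 * \<alpha> ^ N / (1 - \<alpha>)"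
proof -
  have summable: "summable (\<lambda>m. 4 * \<alpha> ^ (m + N))"
    using alpha by (intro summable_mult summable_ignore_initial_segment summable_geometric) auto
  have "(\<lambda>m. 4 * \<alpha> ^ (m + N)) = (\<lambda>m. (4 * \<alpha> ^ N) * \<alpha> ^ m)"
    by (simp add: power_add fun_eq_iff mult_ac)
  then have sum_value: "(\<Sum>m. 4 * \<alpha> ^ (m + N)) = 4 * \<alpha> ^ N / (1 - \<alpha>)"
    using alpha by (simp add: suminf_mult suminf_geometric)
  have term_le: "L2_norm M (\<lambda>\<omega>. \<alpha> ^ (m + N) * level_increment (m + N) t s \<omega>) \<le> 4 * \<alpha> ^ (m + N)" for m
    using alpha L2_norm_level_increment_le_4[of "m + N" t s]
    by (simp add: L2_norm_cmult mult.commute mult_left_mono)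
  have "AE \<omega> in M. summable (\<lambda>m. \<alpha> ^ (m + N) * level_increment (m + N) t s \<omega>)"
    using AE_X_diff_eq_suminf[of t s]
    by eventually_elim (use summable_ignore_initial_segment[where k=N] in blast)
  note series = square_integrable_suminf[OF square_integrable_cmult[OF square_integrable_level_increment]
      term_le summable this]
  from series(1) show "square_integrable M (tail_sum N t s)" by (simp add: tail_sum_def)
  from series(2) show "L2_norm M (tail_sum N t s) \<le> 4 * \<alpha> ^ N / (1 - \<alpha>)"
    by (simp add: tail_sum_def sum_value)
qed

lemma AE_X_diff_eq_head_tail:
  "AE \<omega> in M. X t \<omega> - X s \<omega> = head_sum N t s \<omega> + (tail_sum N t s \<omega> - correction_sum N t s \<omega>)"
  using AE_X_diff_eq_suminf[of t s]
proof eventually_elim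
  case (elim \<omega>)
  then have "X t \<omega> - X s \<omega> = tail_sum N t s \<omega> + (\<Sum>n<N. \<alpha> ^ n * level_increment n t s \<omega>)"
    using suminf_split_initial_segment[OF conjunct1[OF elim], of N] by (simp add: tail_sum_def)
  also have "(\<Sum>n<N. \<alpha> ^ n * level_increment n t s \<omega>) = head_sum N t s \<omega> - correction_sum N t s \<omega>"
    unfolding head_sum_def correction_sum_def by (simp add: sum_subtractf[symmetric] right_diff_distrib)
  finally show ?case by simp
qed

lemma mean_square_X_diff_ge_levels:
  assumes "s < t" "0 < N" and below: "\<And>n. n < N \<Longrightarrow> real b ^ n * (t - s) < 1"
  shows "t - s - 2 * (sqrt (t - s) / (1 - q)) *
      (4 * \<alpha> ^ N / (1 - \<alpha>) + 2 * C * (t - s) powr \<sigma> / (1 - \<alpha> * real b powr \<sigma>))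
    \<le> expectation (\<lambda>\<omega>. (X t \<omega> - X s \<omega>)\<^sup>2)"
proof -
  define P where "P = head_sum N t s"
  define Q where "Q = (\<lambda>\<omega>. tail_sum N t s \<omega> - correction_sum N t s \<omega>)"
  have P: "square_integrable M P" unfolding P_def by (rule square_integrable_head_sum)
  have Q: "square_integrable M Q"
    unfolding Q_def by (intro square_integrable_diff square_integrable_tail_sum square_integrable_correction_sum)
  have "L2_norm M Q \<le> L2_norm M (tail_sum N t s) + L2_norm M (correction_sum N t s)"
    unfolding Q_def by (intro L2_norm_triangle_diff square_integrable_tail_sum square_integrable_correction_sum)
  also have "\<dots> \<le> 4 * \<alpha> ^ N / (1 - \<alpha>) + 2 * C * (t - s) powr \<sigma> / (1 - \<alpha> * real b powr \<sigma>)"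
    using assms by (intro add_mono L2_norm_tail_sum_le L2_norm_correction_sum_le) auto
  finally have "L2_norm M P * L2_norm M Q
      \<le> sqrt (t - s) / (1 - q) * (4 * \<alpha> ^ N / (1 - \<alpha>) + 2 * C * (t - s) powr \<sigma> / (1 - \<alpha> * real b powr \<sigma>))"
    using assms q_less_1 L2_norm_nonneg unfolding P_def
    by (intro mult_mono L2_norm_head_sum_le) auto
  moreover have "t - s \<le> L2_inner M P P"
    unfolding P_def using assms below[of 0] by (intro L2_inner_head_sum_ge) auto
  moreover have "AE \<omega> in M. X t \<omega> - X s \<omega> = P \<omega> + Q \<omega>"
    unfolding P_def Q_def by (rule AE_X_diff_eq_head_tail)
  then have "expectation (\<lambda>\<omega>. (X t \<omega> - X s \<omega>)\<^sup>2) = L2_inner M (\<lambda>\<omega>. P \<omega> + Q \<omega>) (\<lambda>\<omega>. P \<omega> + Q \<omega>)"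
    unfolding L2_inner_self_eq_integral_square
    using square_integrable_measurable[OF square_integrable_add[OF P Q]]
    by (intro integral_cong_AE) auto
  ultimately show ?thesis using L2_inner_add_self_ge[OF P Q] by linarith
qed

lemma alpha_pow_le_at_level:
  assumes "0 \<le> h" "1 \<le> real b ^ N * h"
  shows "\<alpha> ^ N \<le> q ^ N * sqrt h"
proof -
  have "\<alpha> ^ N * 1 \<le> \<alpha> ^ N * sqrt (real b ^ N * h)"
    using assms alpha by (intro mult_left_mono) auto
  then show ?thesis using alpha_pow_mult_sqrt[OF assms(1)] by simp
qed

lemma mean_square_X_diff_ge_relative:
  assumes "s < t" "0 < N" "1 \<le> real b ^ N * (t - s)" "\<And>n. n < N \<Longrightarrow> real b ^ n * (t - s) < 1"
  shows "(1 - 2 / (1 - q) * (4 * q ^ N / (1 - \<alpha>) +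
      2 * C * (t - s) powr (\<sigma> - 1/2) / (1 - \<alpha> * real b powr \<sigma>))) * (t - s)
    \<le> expectation (\<lambda>\<omega>. (X t \<omega> - X s \<omega>)\<^sup>2)"
proof -
  define h where "h = t - s"
  define Z where "Z = 4 * q ^ N / (1 - \<alpha>) + 2 * C * h powr (\<sigma> - 1/2) / (1 - \<alpha> * real b powr \<sigma>)"
  have h: "0 < h" using assms(1) by (simp add: h_def)
  have "4 * \<alpha> ^ N / (1 - \<alpha>) \<le> 4 * (q ^ N * sqrt h) / (1 - \<alpha>)"
    using alpha_pow_le_at_level[of h N] assms(3) h alpha by (simp add: h_def divide_right_mono)
  moreover have "h powr \<sigma> = h powr (\<sigma> - 1/2) * sqrt h"
    using h by (simp add: powr_half_sqrt[symmetric] powr_add[symmetric])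
  ultimately have "4 * \<alpha> ^ N / (1 - \<alpha>) + 2 * C * h powr \<sigma> / (1 - \<alpha> * real b powr \<sigma>) \<le> Z * sqrt h"
    by (simp add: Z_def field_simps)
  then have "2 * (sqrt h / (1 - q)) * (4 * \<alpha> ^ N / (1 - \<alpha>) + 2 * C * h powr \<sigma> / (1 - \<alpha> * real b powr \<sigma>))
      \<le> 2 * (sqrt h / (1 - q)) * (Z * sqrt h)"
    using q_less_1 h by (intro mult_left_mono) auto
  also have "\<dots> = 2 / (1 - q) * Z * h"
    using h by (simp add: field_simps flip: real_sqrt_mult)
  finally show ?thesis
    using mean_square_X_diff_ge_levels[OF assms(1,2,4)] by (simp add: Z_def h_def algebra_simps)
qed

lemma relative_error_le:
  assumes "lam < 1" "q ^ N \<le> (1 - lam) * (1 - q) * (1 - \<alpha>) / 16"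
    and "h powr (\<sigma> - 1/2) \<le> (1 - lam) * (1 - q) * (1 - \<alpha> * real b powr \<sigma>) / (8 * C)"
  shows "2 / (1 - q) * (4 * q ^ N / (1 - \<alpha>) + 2 * C * h powr (\<sigma> - 1/2) / (1 - \<alpha> * real b powr \<sigma>))
    \<le> 1 - lam"
proof -
  let ?r = "\<alpha> * real b powr \<sigma>"
  have "2 / (1 - q) * (4 * q ^ N / (1 - \<alpha>))
      \<le> 2 / (1 - q) * (4 * ((1 - lam) * (1 - q) * (1 - \<alpha>) / 16) / (1 - \<alpha>))"
    using assms(2) q_less_1 alpha by (intro mult_left_mono divide_right_mono) auto
  also have "\<dots> = (1 - lam) / 2" using q_less_1 alpha by simp (simp add: field_simps)
  finally have tail_part: "2 / (1 - q) * (4 * q ^ N / (1 - \<alpha>)) \<le> (1 - lam) / 2" .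
  have "2 / (1 - q) * (2 * C * h powr (\<sigma> - 1/2) / (1 - ?r))
      \<le> 2 / (1 - q) * (2 * C * ((1 - lam) * (1 - q) * (1 - ?r) / (8 * C)) / (1 - ?r))"
    using assms(3) q_less_1 alpha_b_sigma C_pos by (intro mult_left_mono divide_right_mono) auto
  also have "\<dots> = (1 - lam) / 2" using q_less_1 alpha_b_sigma C_pos by simp (simp add: field_simps)
  finally have correction_part: "2 / (1 - q) * (2 * C * h powr (\<sigma> - 1/2) / (1 - ?r)) \<le> (1 - lam) / 2" .
  show ?thesis
    unfolding distrib_left using add_mono[OF tail_part correction_part] by simp
qed

lemma mean_square_X_diff_ge:
  assumes "0 < lam" "lam < 1"
  obtains \<epsilon> where "0 < \<epsilon>"
    "\<And>s t. s < t \<Longrightarrow> t - s < \<epsilon> \<Longrightarrow> lam * (t - s) \<le> expectation (\<lambda>\<omega>. (X t \<omega> - X s \<omega>)\<^sup>2)"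
proof -
  define c1 where "c1 = (1 - lam) * (1 - q) * (1 - \<alpha>) / 16"
  define c2 where "c2 = (1 - lam) * (1 - q) * (1 - \<alpha> * real b powr \<sigma>) / (8 * C)"
  have "0 < c1" "0 < c2"
    using assms q_less_1 alpha alpha_b_sigma C_pos by (simp_all add: c1_def c2_def)
  obtain N0 where N0: "q ^ N0 < c1"
    using real_arch_pow_inv[OF \<open>0 < c1\<close> q_less_1] by blast
  define \<delta> where "\<delta> = c2 powr (1 / (\<sigma> - 1/2))"
  have "0 < \<delta>" using \<open>0 < c2\<close> by (simp add: \<delta>_def)
  show ?thesis
  proof (rule that[of "min (1 / real b ^ N0) \<delta>"])
    show "0 < min (1 / real b ^ N0) \<delta>" using \<open>0 < \<delta>\<close> b by simp
    fix s t :: real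
    assume "s < t" and small: "t - s < min (1 / real b ^ N0) \<delta>"
    then have "real b ^ N0 * (t - s) < 1" using b by (simp add: field_simps)
    then obtain N where "N0 < N" "1 \<le> real b ^ N * (t - s)"
      and below: "\<And>n. n < N \<Longrightarrow> real b ^ n * (t - s) < 1"
      using exists_first_power_ge[of "real b" "t - s" N0] b \<open>s < t\<close> by auto
    have "q ^ N \<le> c1"
      using power_decreasing[of N0 N q] \<open>N0 < N\<close> q_nonneg q_less_1 N0 by linarith
    moreover have "(t - s) powr (\<sigma> - 1/2) \<le> c2"
    proof -
      have "(t - s) powr (\<sigma> - 1/2) \<le> \<delta> powr (\<sigma> - 1/2)"
        using small \<open>s < t\<close> sigma by (intro powr_mono2) auto
      also have "\<dots> = c2" using \<open>0 < c2\<close> sigma by (simp add: \<delta>_def powr_powr)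
      finally show ?thesis .
    qed
    ultimately have "lam * (t - s) \<le> (1 - 2 / (1 - q) * (4 * q ^ N / (1 - \<alpha>) +
        2 * C * (t - s) powr (\<sigma> - 1/2) / (1 - \<alpha> * real b powr \<sigma>))) * (t - s)"
      using relative_error_le[OF assms(2), of N "t - s"] \<open>s < t\<close>
      unfolding c1_def c2_def by (intro mult_right_mono) auto
    also have "\<dots> \<le> expectation (\<lambda>\<omega>. (X t \<omega> - X s \<omega>)\<^sup>2)"
      using \<open>s < t\<close> \<open>N0 < N\<close> \<open>1 \<le> _\<close> below by (intro mean_square_X_diff_ge_relative) auto
    finally show "lam * (t - s) \<le> expectation (\<lambda>\<omega>. (X t \<omega> - X s \<omega>)\<^sup>2)" .
  qed
qed

lemma mean_square_X_increment_upper: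
  "\<exists>L>0. \<forall>s\<in>{0..1}. \<forall>t\<in>{0..1}. expectation (\<lambda>\<omega>. (X t \<omega> - X s \<omega>)\<^sup>2) \<le> L * \<bar>t - s\<bar>"
proof (intro exI conjI ballI)
  show "0 < ((4 + 2 * C) / (1 - q))\<^sup>2" using C_pos q_less_1 by simp
  fix s t :: real
  show "expectation (\<lambda>\<omega>. (X t \<omega> - X s \<omega>)\<^sup>2) \<le> ((4 + 2 * C) / (1 - q))\<^sup>2 * \<bar>t - s\<bar>"
    using mean_square_X_diff_le[of s t] mean_square_X_diff_le[of t s]
    by (cases "s \<le> t") (simp_all add: power2_commute)
qed

lemma mean_square_X_increment_lower:
  "\<forall>lam\<in>{0<..<1}. \<exists>\<epsilon>>0. \<forall>s\<in>{0..1}. \<forall>t\<in>{0..1}. \<bar>t - s\<bar> < \<epsilon> \<longrightarrow>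
     lam * \<bar>t - s\<bar> \<le> expectation (\<lambda>\<omega>. (X t \<omega> - X s \<omega>)\<^sup>2)"
proof
  fix lam :: real assume "lam \<in> {0<..<1}"
  then obtain \<epsilon> where "0 < \<epsilon>" and lower:
    "\<And>s t. s < t \<Longrightarrow> t - s < \<epsilon> \<Longrightarrow> lam * (t - s) \<le> expectation (\<lambda>\<omega>. (X t \<omega> - X s \<omega>)\<^sup>2)"
    using mean_square_X_diff_ge by auto
  have "lam * \<bar>t - s\<bar> \<le> expectation (\<lambda>\<omega>. (X t \<omega> - X s \<omega>)\<^sup>2)" if "\<bar>t - s\<bar> < \<epsilon>" for s t
    using lower[of s t] lower[of t s] that
    by (cases s t rule: linorder_cases) (simp_all add: power2_commute)
  with \<open>0 < \<epsilon>\<close> show "\<exists>\<epsilon>>0. \<forall>s\<in>{0..1}. \<forall>t\<in>{0..1}. \<bar>t - s\<bar> < \<epsilon> \<longrightarrow>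
     lam * \<bar>t - s\<bar> \<le> expectation (\<lambda>\<omega>. (X t \<omega> - X s \<omega>)\<^sup>2)" by blast
qed

end

theorem lemma3p10:
  fixes M :: "'a measure" and W :: "real \<Rightarrow> 'a \<Rightarrow> real" and \<kappa> :: "real \<Rightarrow> real"
    and \<tau> \<alpha> :: real and b :: nat
  assumes BM: "std_brownian_motion M W"
    and kappa_range: "\<forall>x\<in>{0..1}. \<kappa> x \<in> {0..1}"
    and kappa0: "\<kappa> 0 = 0" and kappa1: "\<kappa> 1 = 1"
    and tau: "\<tau> > 1/2" and holder: "holder_on {0..1} \<tau> \<kappa>"
    and alpha: "0 < \<alpha>" "\<alpha> < 1"
    and b: "b \<ge> 2"
    and ab: "\<alpha>\<^sup>2 * real b < 1"
  shows "(\<exists>L>0. \<forall>s\<in>{0..1}. \<forall>t\<in>{0..1}.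
            (\<integral>\<omega>. (Xproc \<alpha> b W \<kappa> t \<omega> - Xproc \<alpha> b W \<kappa> s \<omega>)\<^sup>2 \<partial>M) \<le> L * \<bar>t - s\<bar>)
       \<and> (\<forall>lam\<in>{0<..<1}. \<exists>\<epsilon>>0. \<forall>s\<in>{0..1}. \<forall>t\<in>{0..1}. \<bar>t - s\<bar> < \<epsilon> \<longrightarrow>
            (\<integral>\<omega>. (Xproc \<alpha> b W \<kappa> t \<omega> - Xproc \<alpha> b W \<kappa> s \<omega>)\<^sup>2 \<partial>M) \<ge> lam * \<bar>t - s\<bar>)"
proof -
  obtain \<sigma> where \<sigma>: "1/2 < \<sigma>" "\<sigma> \<le> \<tau>" "\<alpha> * real b powr \<sigma> < 1"
    using exists_exponent_above_half[OF tau alpha(1) ab] b by auto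
  obtain C where "0 < C" "\<And>x y. x \<in> {0..1} \<Longrightarrow> y \<in> {0..1} \<Longrightarrow> \<bar>\<kappa> x - \<kappa> y\<bar> \<le> C * \<bar>x - y\<bar> powr \<sigma>"
    using holder_on_unit_interval_smaller_exponent[OF holder \<sigma>(2)] by blast
  then interpret bridge_series M W \<kappa> \<alpha> b C \<sigma>
    using BM kappa_range kappa0 kappa1 alpha b ab \<sigma> by unfold_locales auto
  show ?thesis
    using mean_square_X_increment_upper mean_square_X_increment_lower by auto
qed

end
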